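(* Let $p\in\mathbb N$ and for $j=1,\dots,p$ let $w_j(x)=\sum_{i=0}^\infty\lambda_{i,j,1}x^i$, $x\in\Delta_0=[-1,1]$, be real power series. The series $w_1,\dots,w_p$ converge uniformly on $\Delta_0$ to an M-Nikishin system of functions $(\widetilde s_1,\dots,\widetilde s_p)$ if and only if for each $k=1,\dots,p-1$ there exists a system of sequences $(C_{k,k},\dots,C_{p,k})$ (constructed as in the context) such that the restricted Hausdorff moment problems of all these sequences have solutions.
   Context: $\Delta_0=[-1,1]$, $\Delta_1=[0,1]$. $\mathcal M(\Delta_1)$: finite Borel measures on $\Delta_1$ with infinitely many points in the support and not changing sign. $\mathcal M_0(\Delta_1)$: those $\sigma\in\mathcal M(\Delta_1)$ with $\lim_{x\to1,\,x\in(0,1)}\left|\int_{\Delta_1}\frac{d\sigma(t)}{1-tx}\right|<+\infty$. For $\sigma\in\mathcal M_0(\Delta_1)$ put $\widetilde\sigma(x)=\int_{\Delta_1}\frac{d\sigma(t)}{1-tx}$. For $\sigma_\alpha,\sigma_\beta\in\mathcal M_0(\Delta_1)$ define the measure $[\sigma_\alpha,\sigma_\beta]$ by $d[\sigma_\alpha,\sigma_\beta](x)=\widetilde\sigma_\beta(x)\,d\sigma_\alpha(x)$, and recursively $[\sigma_1,\sigma_2,\dots,\sigma_k]=[\sigma_1,[\sigma_2,\dots,\sigma_k]]$. Given $\sigma_1,\dots,\sigma_p\in\mathcal M_0(\Delta_1)$, the M-Nikishin system of measures is $(s_1,\dots,s_p)$ with $s_1=\sigma_1$, $s_k=[\sigma_1,\dots,\sigma_k]$,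 and the corresponding M-Nikishin system of functions is $(\widetilde s_1,\dots,\widetilde s_p)$. The restricted Hausdorff moment problem for a real sequence $\{c_i\}_{i\ge0}$ asks for $\sigma\in\mathcal M_0(\Delta_1)$ with $c_i=\int t^i d\sigma(t)$ for all $i\ge0$. Construction of the sequences: put $\theta_{j,1}=(\lambda_{0,j,1},\lambda_{1,j,1},\dots)^\top$ for $j=1,\dots,p$ and let $\Theta_1=(\lambda_{i+m,1,1})_{i,m\ge0}$ (semi-infinite Hankel matrix). Recursively, given $\Theta_k=(\lambda_{i+m,k,k})_{i,m\ge0}$ and vectors $\theta_{j,k}$, $j=k,\dots,p$, look for vectors $\theta_{j,k+1}=(\lambda_{0,j,k+1},\lambda_{1,j,k+1},\dots)^\top$, $j=k+1,\dots,p$, solving $\Theta_k\theta_{j,k+1}=\theta_{j,k}$, meaning $\sum_{i=0}^\infty\lambda_{l+i,k,k}\lambda_{i,j,k+1}=\lambda_{l,j,k}$ for all $l\in\mathbb Z_+$; if such solutions exist set $\Theta_{k+1}=(\lambda_{i+m,k+1,k+1})_{i,m\ge0}$. The sequences are $C_{j,k}=\{\lambda_{i,j,k}\}_{i=0}^\infty$, $j=k,\dots,p$. If the linear systems at some step have no solution, the system $(C_{k,k},\dots,C_{p,k})$ is said not to exist. *)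

theory Defs
  imports "HOL-Analysis.Analysis"
begin

text \<open>A finite Borel measure on [0,1] that does not change sign is represented as a
pair (c, mu): a sign c in {1,-1} and a finite positive Borel measure mu on the real line
concentrated on [0,1]. The signed measure is c * mu.\<close>

type_synonym smeasure = "real \<times> real measure"

definition msupp :: "real measure \<Rightarrow> real set" where
  "msupp mu = {x. \<forall>e>0. emeasure mu (ball x e) \<noteq> 0}"

definition in_M :: "smeasure \<Rightarrow> bool" where
  "in_M s \<longleftrightarrow> (fst s = 1 \<or> fst s = -1) \<and> sets (snd s) = sets borel
     \<and> finite_measure (snd s) \<and> emeasure (snd s) (- {0..1}) = 0
     \<and> infinite (msupp (snd s))"

definition sint :: "smeasure \<Rightarrow> (real \<Rightarrow> real) \<Rightarrow> real" where
  "sint s f = fst s * (\<integral>t. f t \<partial>(snd s))"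

definition ctr :: "smeasure \<Rightarrow> real \<Rightarrow> real" where
  "ctr s x = sint s (\<lambda>t. 1 / (1 - t * x))"

definition in_M0 :: "smeasure \<Rightarrow> bool" where
  "in_M0 s \<longleftrightarrow> in_M s \<and> (\<exists>L. ((\<lambda>x. \<bar>ctr s x\<bar>) \<longlongrightarrow> L) (at 1 within {0<..<1}))"

definition bracket :: "smeasure \<Rightarrow> smeasure \<Rightarrow> smeasure" where
  "bracket a b = (fst a * fst b,
     density (snd a) (\<lambda>x. ennreal (\<integral>t. 1 / (1 - t * x) \<partial>(snd b))))"

fun nik :: "smeasure list \<Rightarrow> smeasure" where
  "nik [] = (1, null_measure borel)"
| "nik [s] = s"
| "nik (s # ss) = bracket s (nik ss)"

definition rhmp_solvable :: "(nat \<Rightarrow> real) \<Rightarrow> bool" where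
  "rhmp_solvable c \<longleftrightarrow> (\<exists>s. in_M0 s \<and> (\<forall>i. c i = sint s (\<lambda>t. t ^ i)))"

end

theory Submission
  imports Defs
begin

text \<open>A measure in M0 is a finite measure on [0,1) with \<integral> d\<sigma>(t)/(1 - t) < \<infinity>. This is exactly
  what keeps its Cauchy transform bounded near 1, and also what lets the expansion
  1/(1 - t x) = \<Sum> (t x)^i be integrated term by term, uniformly on [-1,1]; so the Taylor
  coefficients of the transform are the moments. Expanding the density of [\<sigma>_a, \<sigma>_b] in the same
  way shows that its l-th moment is \<Sum>_i c_(l+i)(\<sigma>_a) c_i(\<sigma>_b), which is the linear system
  \<Theta>_k \<theta>_(j,k+1) = \<theta>_(j,k). Hence the moments of [\<sigma>_k, ..., \<sigma>_j] solve the construction.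
  Conversely, solving the moment problems of the C_(k,k) gives measures \<sigma>_k, a downward induction
  on k identifies the moments of [\<sigma>_k, ..., \<sigma>_j] with C_(j,k), and uniqueness of power series
  coefficients finishes the proof.\<close>

definition M0_measure :: "real measure \<Rightarrow> bool" where
  "M0_measure \<mu> \<longleftrightarrow> sets \<mu> = sets borel \<and> finite_measure \<mu> \<and> emeasure \<mu> (- {0..<1}) = 0
     \<and> integrable \<mu> (\<lambda>t. 1 / (1 - t))"

definition cauchy_transform :: "real measure \<Rightarrow> real \<Rightarrow> real" where
  "cauchy_transform \<mu> x = (\<integral>t. 1 / (1 - t * x) \<partial>\<mu>)"

lemma ctr_eq_cauchy_transform: "ctr s = (\<lambda>x. fst s * cauchy_transform (snd s) x)"
  by (simp add: fun_eq_iff ctr_def sint_def cauchy_transform_def)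

lemma measurable_sets_borel:
  "sets M = sets borel \<Longrightarrow> f \<in> borel_measurable borel \<Longrightarrow> f \<in> borel_measurable M"
  using measurable_cong_sets by blast

lemma cauchy_kernel_bounds:
  fixes t x :: real
  assumes "0 \<le> t" "t < 1" "\<bar>x\<bar> \<le> 1"
  shows "0 < 1 - t * x" "\<bar>1 / (1 - t * x)\<bar> \<le> 1 / (1 - t)"
    and "\<bar>(t * x) ^ n / (1 - t * x)\<bar> \<le> t ^ n / (1 - t)" "t ^ n / (1 - t) \<le> 1 / (1 - t)"
proof -
  have "t * x \<le> t"
    using mult_left_mono[of x 1 t] assms by (simp add: abs_le_iff)
  then have le: "1 - t \<le> 1 - t * x" and pos: "0 < 1 - t" using assms by linarith+
  then show "0 < 1 - t * x" by linarith
  then show "\<bar>1 / (1 - t * x)\<bar> \<le> 1 / (1 - t)"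
    using le pos by (simp add: frac_le)
  have "\<bar>(t * x) ^ n\<bar> \<le> t ^ n"
    using assms by (simp add: abs_mult power_abs power_mult_distrib mult_left_le power_le_one)
  then show "\<bar>(t * x) ^ n / (1 - t * x)\<bar> \<le> t ^ n / (1 - t)"
    using \<open>0 < 1 - t * x\<close> le pos assms(1) by (simp add: abs_divide frac_le)
  show "t ^ n / (1 - t) \<le> 1 / (1 - t)"
    using assms pos by (simp add: divide_right_mono power_le_one)
qed

lemma AE_M0_measure: "M0_measure \<mu> \<Longrightarrow> AE t in \<mu>. 0 \<le> t \<and> t < 1"
  by (rule AE_I'[where N = "- {0..<1}"]) (auto simp: M0_measure_def null_sets_def)

lemma M0_measureI:
  assumes sb: "sets \<mu> = sets borel" and supp: "emeasure \<mu> (- {0..<1}) = 0"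
    and int: "integrable \<mu> (\<lambda>t. 1 / (1 - t))"
  shows "M0_measure \<mu>"
proof -
  have AE: "AE t in \<mu>. 0 \<le> t \<and> t < 1"
    by (rule AE_I'[where N = "- {0..<1}"]) (use supp in \<open>auto simp: null_sets_def sb\<close>)
  have "emeasure \<mu> (space \<mu>) = (\<integral>\<^sup>+t. 1 \<partial>\<mu>)" by simp
  also have "\<dots> \<le> (\<integral>\<^sup>+t. ennreal (norm (1 / (1 - t))) \<partial>\<mu>)"
  proof (rule nn_integral_mono_AE)
    show "AE t in \<mu>. 1 \<le> ennreal (norm (1 / (1 - t)))"
      using AE
    proof eventually_elim
      case (elim t)
      then have "1 \<le> norm (1 / (1 - t))" by (simp add: le_divide_eq)
      then show ?case using ennreal_leI by fastforce
    qed
  qed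
  also have "\<dots> < \<infinity>"
    using int by (simp add: integrable_iff_bounded)
  finally have "finite_measure \<mu>" by (intro finite_measureI) simp
  with assms show ?thesis by (simp add: M0_measure_def)
qed

lemma integrable_M0_measure_dominated:
  fixes f :: "real \<Rightarrow> real"
  assumes "M0_measure \<mu>" "f \<in> borel_measurable borel"
    and "\<And>t. 0 \<le> t \<Longrightarrow> t < 1 \<Longrightarrow> \<bar>f t\<bar> \<le> C / (1 - t)"
  shows "integrable \<mu> f"
proof (rule Bochner_Integration.integrable_bound)
  show "integrable \<mu> (\<lambda>t. C * (1 / (1 - t)))"
    using assms(1) by (intro Bochner_Integration.integrable_mult_right) (simp add: M0_measure_def)
  show "f \<in> borel_measurable \<mu>"
    using assms(1,2) by (simp add: M0_measure_def measurable_sets_borel)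
  show "AE t in \<mu>. norm (f t) \<le> norm (C * (1 / (1 - t)))"
    using AE_M0_measure[OF assms(1)]
  proof eventually_elim
    case (elim t)
    then have "\<bar>f t\<bar> \<le> C * (1 / (1 - t))" using assms(3) by simp
    then show ?case using abs_ge_self[of "C * (1 / (1 - t))"] by simp
  qed
qed

lemma integrable_M0_measure_bounded:
  fixes f :: "real \<Rightarrow> real"
  assumes "M0_measure \<mu>" "f \<in> borel_measurable borel"
    and "\<And>t. 0 \<le> t \<Longrightarrow> t < 1 \<Longrightarrow> \<bar>f t\<bar> \<le> B"
  shows "integrable \<mu> f"
proof (rule integrable_M0_measure_dominated[OF assms(1,2)])
  fix t :: real assume t: "0 \<le> t" "t < 1"
  then have "0 \<le> B" using assms(3) abs_ge_zero order_trans by blast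
  then have "B \<le> B / (1 - t)" using t by (simp add: le_divide_eq mult_left_le)
  then show "\<bar>f t\<bar> \<le> B / (1 - t)" using assms(3)[OF t] by linarith
qed

lemma cauchy_transform_minus_partial_sum:
  assumes "M0_measure \<mu>" "\<bar>x\<bar> \<le> 1"
  shows "cauchy_transform \<mu> x - (\<Sum>i<n. (\<integral>t. t ^ i \<partial>\<mu>) * x ^ i)
           = (\<integral>t. (t * x) ^ n / (1 - t * x) \<partial>\<mu>)"
proof -
  have sb: "sets \<mu> = sets borel" using assms(1) by (simp add: M0_measure_def)
  have int_power: "integrable \<mu> (\<lambda>t. t ^ i * x ^ i)" for i
    by (rule integrable_M0_measure_bounded[OF assms(1), where B = 1])
       (use assms(2) in \<open>auto simp: abs_mult power_abs power_le_one mult_le_one\<close>)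
  have int_kernel: "integrable \<mu> (\<lambda>t. 1 / (1 - t * x))"
    by (rule integrable_M0_measure_dominated[OF assms(1), where C = 1])
       (use cauchy_kernel_bounds(2) assms(2) in auto)
  have "cauchy_transform \<mu> x - (\<Sum>i<n. (\<integral>t. t ^ i \<partial>\<mu>) * x ^ i)
      = (\<integral>t. 1 / (1 - t * x) - (\<Sum>i<n. t ^ i * x ^ i) \<partial>\<mu>)"
    using int_power int_kernel by (simp add: cauchy_transform_def Bochner_Integration.integral_sum)
  also have "\<dots> = (\<integral>t. (t * x) ^ n / (1 - t * x) \<partial>\<mu>)"
  proof (rule integral_cong_AE)
    show "AE t in \<mu>. 1 / (1 - t * x) - (\<Sum>i<n. t ^ i * x ^ i) = (t * x) ^ n / (1 - t * x)"
      using AE_M0_measure[OF assms(1)]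
    proof eventually_elim
      case (elim t)
      then have "t * x \<noteq> 1" using cauchy_kernel_bounds(1) assms(2) by fastforce
      then have "(\<Sum>i<n. t ^ i * x ^ i) = (1 - (t * x) ^ n) / (1 - t * x)"
        by (simp add: power_mult_distrib[symmetric] sum_gp_strict)
      then show ?case by (simp add: diff_divide_distrib)
    qed
  qed (auto intro: measurable_sets_borel[OF sb])
  finally show ?thesis .
qed

lemma M0_measure_tail_integral_tendsto_0:
  assumes "M0_measure \<mu>"
  shows "(\<lambda>n. \<integral>t. t ^ n / (1 - t) \<partial>\<mu>) \<longlonglongrightarrow> 0"
proof -
  have "(\<lambda>n. \<integral>t. t ^ n / (1 - t) \<partial>\<mu>) \<longlonglongrightarrow> (\<integral>t. 0 \<partial>\<mu>)"
  proof (rule integral_dominated_convergence[where w = "\<lambda>t. 1 / (1 - t)"])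
    show "AE t in \<mu>. (\<lambda>n. t ^ n / (1 - t)) \<longlonglongrightarrow> 0"
      using AE_M0_measure[OF assms]
      by eventually_elim (auto intro!: tendsto_divide_zero LIMSEQ_power_zero)
    show "AE t in \<mu>. norm (t ^ n / (1 - t)) \<le> 1 / (1 - t)" for n
      using AE_M0_measure[OF assms]
      by eventually_elim (use cauchy_kernel_bounds(4)[of _ 1 n] in auto)
  qed (use assms in \<open>auto simp: M0_measure_def intro: measurable_sets_borel\<close>)
  then show ?thesis by simp
qed

lemma cauchy_transform_powser:
  assumes "M0_measure \<mu>"
  shows "uniform_limit {-1..1} (\<lambda>n x. \<Sum>i<n. (\<integral>t. t ^ i \<partial>\<mu>) * x ^ i)
           (cauchy_transform \<mu>) sequentially"
proof (rule uniform_limitI)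
  fix r :: real assume "0 < r"
  with M0_measure_tail_integral_tendsto_0[OF assms]
  have "\<forall>\<^sub>F n in sequentially. (\<integral>t. t ^ n / (1 - t) \<partial>\<mu>) < r"
    by (rule order_tendstoD(2))
  then show "\<forall>\<^sub>F n in sequentially. \<forall>x\<in>{-1..1}.
      dist (\<Sum>i<n. (\<integral>t. t ^ i \<partial>\<mu>) * x ^ i) (cauchy_transform \<mu> x) < r"
  proof (rule eventually_mono, intro ballI)
    fix n and x :: real
    assume tail: "(\<integral>t. t ^ n / (1 - t) \<partial>\<mu>) < r" and "x \<in> {-1..1}"
    then have x: "\<bar>x\<bar> \<le> 1" by auto
    have "dist (\<Sum>i<n. (\<integral>t. t ^ i \<partial>\<mu>) * x ^ i) (cauchy_transform \<mu> x)
        = \<bar>\<integral>t. (t * x) ^ n / (1 - t * x) \<partial>\<mu>\<bar>"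
      using cauchy_transform_minus_partial_sum[OF assms x] by (simp add: dist_real_def abs_minus_commute)
    also have "\<dots> \<le> (\<integral>t. \<bar>(t * x) ^ n / (1 - t * x)\<bar> \<partial>\<mu>)"
      using integral_norm_bound[of \<mu> "\<lambda>t. (t * x) ^ n / (1 - t * x)"] by simp
    also have "\<dots> \<le> (\<integral>t. t ^ n / (1 - t) \<partial>\<mu>)"
    proof (rule integral_mono_AE)
      show "integrable \<mu> (\<lambda>t. \<bar>(t * x) ^ n / (1 - t * x)\<bar>)"
      proof (rule integrable_M0_measure_dominated[OF assms, where C = 1])
        fix t :: real assume "0 \<le> t" "t < 1"
        from cauchy_kernel_bounds(3,4)[OF this x, of n]
        show "\<bar>\<bar>(t * x) ^ n / (1 - t * x)\<bar>\<bar> \<le> 1 / (1 - t)" by simp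
      qed simp
      show "integrable \<mu> (\<lambda>t. t ^ n / (1 - t))"
        by (rule integrable_M0_measure_dominated[OF assms, where C = 1])
           (use cauchy_kernel_bounds(4)[of _ 1] in auto)
      show "AE t in \<mu>. \<bar>(t * x) ^ n / (1 - t * x)\<bar> \<le> t ^ n / (1 - t)"
        using AE_M0_measure[OF assms] by eventually_elim (use x cauchy_kernel_bounds(3) in auto)
    qed
    finally show "dist (\<Sum>i<n. (\<integral>t. t ^ i \<partial>\<mu>) * x ^ i) (cauchy_transform \<mu> x) < r"
      using tail by linarith
  qed
qed

lemma ctr_powser:
  assumes "M0_measure (snd s)"
  shows "uniform_limit {-1..1} (\<lambda>n x. \<Sum>i<n. sint s (\<lambda>t. t ^ i) * x ^ i) (ctr s) sequentially"
  using bounded_linear.uniform_limit[OF bounded_linear_mult_right[of "fst s"]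
      cauchy_transform_powser[OF assms]]
  by (simp add: ctr_eq_cauchy_transform sint_def sum_distrib_left mult.assoc)

lemma nn_integral_cauchy_kernel:
  assumes "sets \<mu> = sets borel" "finite_measure \<mu>" "emeasure \<mu> (- {0..1}) = 0"
    and "0 \<le> x" "x < 1"
  shows "0 \<le> cauchy_transform \<mu> x"
    and "(\<integral>\<^sup>+t. ennreal (1 / (1 - t * x)) \<partial>\<mu>) = ennreal (cauchy_transform \<mu> x)"
proof -
  interpret finite_measure \<mu> by (rule assms(2))
  have AE: "AE t in \<mu>. 0 \<le> t \<and> t \<le> 1"
    by (rule AE_I'[where N = "- {0..1}"]) (use assms(3) in \<open>auto simp: null_sets_def assms(1)\<close>)
  have kernel: "0 < 1 - x \<and> 1 - x \<le> 1 - t * x" if "0 \<le> t" "t \<le> 1" for t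
    using mult_left_le_one_le[of x t] that assms(4,5) by auto
  have nonneg: "AE t in \<mu>. 0 \<le> 1 / (1 - t * x)"
    using AE by eventually_elim (use kernel in fastforce)
  have "integrable \<mu> (\<lambda>t. 1 / (1 - t * x))"
  proof (rule integrable_const_bound[where B = "1 / (1 - x)"])
    show "AE t in \<mu>. norm (1 / (1 - t * x)) \<le> 1 / (1 - x)"
      using AE
    proof eventually_elim
      case (elim t)
      with kernel have "0 < 1 - x" "1 - x \<le> 1 - t * x" by auto
      then show ?case by (simp add: frac_le)
    qed
  qed (use assms(1) in \<open>auto intro: measurable_sets_borel\<close>)
  from nn_integral_eq_integral[OF this nonneg]
  show "(\<integral>\<^sup>+t. ennreal (1 / (1 - t * x)) \<partial>\<mu>) = ennreal (cauchy_transform \<mu> x)"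
    by (simp add: cauchy_transform_def)
  show "0 \<le> cauchy_transform \<mu> x"
    unfolding cauchy_transform_def by (rule integral_nonneg_AE[OF nonneg])
qed

text \<open>As x tends to 1 from below the kernel tends to 1/(1 - t), and to \<infinity> at t = 1, so by
  Fatou's lemma a bound on the transform near 1 makes 1/(1 - t) integrable and leaves no mass at 1.\<close>
lemma M0_measure_if_transform_bounded:
  fixes \<mu> :: "real measure" and B :: real
  assumes sb: "sets \<mu> = sets borel" and supp: "emeasure \<mu> (- {0..1}) = 0"
    and bound: "\<forall>\<^sub>F x in at 1 within {0<..<1}.
                  (\<integral>\<^sup>+t. ennreal (1 / (1 - t * x)) \<partial>\<mu>) \<le> ennreal B"
  shows "M0_measure \<mu>"
proof -
  define x where "x n = 1 - 1 / (2 + real n)" for n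
  define h where "h t = (if t < 1 then ennreal (1 / (1 - t)) else \<infinity>)" for t :: real
  have to_top: "filterlim (\<lambda>n. 2 + real n) at_top sequentially"
    by (rule filterlim_tendsto_add_at_top[OF tendsto_const filterlim_real_sequentially])
  have "(\<lambda>n. 1 / (2 + real n)) \<longlonglongrightarrow> 0"
    by (rule tendsto_divide_0[OF tendsto_const filterlim_at_top_imp_at_infinity[OF to_top]])
  then have x_lim: "x \<longlonglongrightarrow> 1"
    unfolding x_def using tendsto_diff[OF tendsto_const[of 1]] by fastforce
  have "filterlim x (at 1 within {0<..<1}) sequentially"
    unfolding filterlim_at using x_lim by (auto intro!: always_eventually simp: x_def field_simps)
  with bound have eventually_bound:
    "\<forall>\<^sub>F n in sequentially. (\<integral>\<^sup>+t. ennreal (1 / (1 - t * x n)) \<partial>\<mu>) \<le> ennreal B"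
    by (rule eventually_compose_filterlim)
  have AE01: "AE t in \<mu>. 0 \<le> t \<and> t \<le> 1"
    by (rule AE_I'[where N = "- {0..1}"]) (use supp in \<open>auto simp: null_sets_def sb\<close>)
  have "AE t in \<mu>. h t = liminf (\<lambda>n. ennreal (1 / (1 - t * x n)))"
    using AE01
  proof eventually_elim
    case (elim t)
    have "(\<lambda>n. ennreal (1 / (1 - t * x n))) \<longlonglongrightarrow> h t"
    proof (cases "t < 1")
      case True
      then show ?thesis using True x_lim by (auto simp: h_def intro!: tendsto_eq_intros)
    next
      case False
      then have "t = 1" using elim by simp
      then have "(\<lambda>n. ennreal (1 / (1 - t * x n))) = (\<lambda>n. ennreal (2 + real n))" and "h t = \<infinity>"
        using elim by (simp_all add: x_def h_def)
      then show ?thesis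
        using ennreal_tendsto_top_eq_at_top[THEN iffD2, OF to_top] by simp
    qed
    then show ?case by (simp add: lim_imp_Liminf)
  qed
  then have "(\<integral>\<^sup>+t. h t \<partial>\<mu>) = (\<integral>\<^sup>+t. liminf (\<lambda>n. ennreal (1 / (1 - t * x n))) \<partial>\<mu>)"
    by (rule nn_integral_cong_AE)
  also have "\<dots> \<le> liminf (\<lambda>n. \<integral>\<^sup>+t. ennreal (1 / (1 - t * x n)) \<partial>\<mu>)"
    by (rule nn_integral_liminf) (simp add: sb measurable_sets_borel)
  also have "\<dots> \<le> ennreal B"
    by (rule Liminf_le[OF trivial_limit_sequentially eventually_bound])
  finally have h_bound: "(\<integral>\<^sup>+t. h t \<partial>\<mu>) \<le> ennreal B" .
  have h_meas: "h \<in> borel_measurable \<mu>"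
    unfolding h_def by (rule measurable_sets_borel[OF sb]) measurable
  have "AE t in \<mu>. h t \<noteq> \<infinity>"
    using h_bound by (intro nn_integral_PInf_AE[OF h_meas]) (auto simp: top_unique)
  with AE01 have AE: "AE t in \<mu>. 0 \<le> t \<and> t < 1"
    by eventually_elim (auto simp: h_def split: if_splits)
  have "emeasure \<mu> (- {0..<1}) = 0"
    using AE by (subst (asm) AE_iff_measurable[OF _ refl])
      (auto simp: sb Compl_eq set_diff_eq sets_eq_imp_space_eq[OF sb])
  moreover have "integrable \<mu> (\<lambda>t. 1 / (1 - t))"
  proof (rule integrableI_bounded)
    have "(\<integral>\<^sup>+t. ennreal (norm (1 / (1 - t))) \<partial>\<mu>) = (\<integral>\<^sup>+t. h t \<partial>\<mu>)"
      using AE by (intro nn_integral_cong_AE) (auto simp: h_def)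
    then show "(\<integral>\<^sup>+t. ennreal (norm (1 / (1 - t))) \<partial>\<mu>) < \<infinity>"
      using h_bound by (simp add: le_less_trans)
  qed (simp add: sb measurable_sets_borel)
  ultimately show ?thesis
    by (rule M0_measureI[OF sb])
qed

lemma in_M0_iff: "in_M0 s \<longleftrightarrow> in_M s \<and> M0_measure (snd s)"
proof
  assume "in_M0 s"
  then obtain L where "in_M s" and lim: "((\<lambda>x. \<bar>ctr s x\<bar>) \<longlongrightarrow> L) (at 1 within {0<..<1})"
    by (auto simp: in_M0_def)
  then have sb: "sets (snd s) = sets borel" and fin: "finite_measure (snd s)"
    and supp: "emeasure (snd s) (- {0..1}) = 0" and sign: "\<bar>fst s\<bar> = 1"
    by (auto simp: in_M_def)
  have "\<forall>\<^sub>F x in at 1 within {0<..<1}. x \<in> {0<..<1} \<and> \<bar>ctr s x\<bar> < L + 1"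
    using order_tendstoD(2)[OF lim, of "L + 1"] by (simp add: eventually_conj_iff eventually_at_filter)
  then have "\<forall>\<^sub>F x in at 1 within {0<..<1}.
      (\<integral>\<^sup>+t. ennreal (1 / (1 - t * x)) \<partial>snd s) \<le> ennreal (L + 1)"
  proof eventually_elim
    case (elim x)
    then have "0 \<le> x" "x < 1" by auto
    note transform = nn_integral_cauchy_kernel[OF sb fin supp this]
    have "\<bar>ctr s x\<bar> = cauchy_transform (snd s) x"
      using transform(1) sign by (simp add: ctr_eq_cauchy_transform abs_mult)
    then show ?case using elim transform(2) by (simp add: ennreal_leI)
  qed
  with \<open>in_M s\<close> show "in_M s \<and> M0_measure (snd s)"
    using M0_measure_if_transform_bounded[OF sb supp] by blast
next
  assume s: "in_M s \<and> M0_measure (snd s)"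
  have "continuous_on {-1..1} (ctr s)"
    by (rule uniform_limit_theorem[OF _ ctr_powser])
       (use s in \<open>auto intro!: always_eventually continuous_intros\<close>)
  then have "(ctr s \<longlongrightarrow> ctr s 1) (at 1 within {-1..1})"
    by (simp add: continuous_on_def)
  then have "(ctr s \<longlongrightarrow> ctr s 1) (at 1 within {0<..<1})"
    by (rule tendsto_within_subset) auto
  then show "in_M0 s"
    unfolding in_M0_def using s by (blast intro: tendsto_rabs)
qed

lemma borel_measurable_cauchy_transform:
  assumes sb: "sets \<nu> = sets borel" and "finite_measure \<nu>"
  shows "cauchy_transform \<nu> \<in> borel_measurable borel"
proof -
  interpret finite_measure \<nu> by fact
  have "sets (borel \<Otimes>\<^sub>M \<nu>) = sets ((borel :: real measure) \<Otimes>\<^sub>M (borel :: real measure))"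
    by (rule sets_pair_measure_cong) (auto simp: sb)
  moreover have "(\<lambda>(x :: real, t :: real). 1 / (1 - t * x)) \<in> borel_measurable (borel \<Otimes>\<^sub>M borel)"
    by measurable
  ultimately have "(\<lambda>(x :: real, t :: real). 1 / (1 - t * x)) \<in> borel_measurable (borel \<Otimes>\<^sub>M \<nu>)"
    using measurable_cong_sets by blast
  then show ?thesis
    unfolding cauchy_transform_def by (rule borel_measurable_lebesgue_integral[OF measurable_compose_rev[OF _ measurable_id]])
qed

lemma cauchy_transform_bounds:
  assumes "M0_measure \<nu>" "0 \<le> x" "x < 1"
  shows "measure \<nu> (space \<nu>) \<le> cauchy_transform \<nu> x" "cauchy_transform \<nu> x \<le> cauchy_transform \<nu> 1"
proof -
  interpret finite_measure \<nu> using assms(1) by (simp add: M0_measure_def)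
  have int_kernel: "integrable \<nu> (\<lambda>t. 1 / (1 - t * y))" if "\<bar>y\<bar> \<le> 1" for y
    by (rule integrable_M0_measure_dominated[OF assms(1), where C = 1])
       (use cauchy_kernel_bounds(2) that in auto)
  have "measure \<nu> (space \<nu>) = (\<integral>t. 1 \<partial>\<nu>)" by simp
  also have "\<dots> \<le> cauchy_transform \<nu> x"
    unfolding cauchy_transform_def
  proof (rule integral_mono_AE)
    show "AE t in \<nu>. 1 \<le> 1 / (1 - t * x)"
      using AE_M0_measure[OF assms(1)]
    proof eventually_elim
      case (elim t)
      then have "0 < 1 - t * x" using cauchy_kernel_bounds(1)[of t x] assms(2,3) by simp
      moreover have "0 \<le> t * x" using elim assms(2) by simp
      ultimately show ?case by (simp add: le_divide_eq)
    qed
  qed (use int_kernel assms(2,3) in auto)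
  finally show "measure \<nu> (space \<nu>) \<le> cauchy_transform \<nu> x" .
  show "cauchy_transform \<nu> x \<le> cauchy_transform \<nu> 1"
    unfolding cauchy_transform_def
  proof (rule integral_mono_AE)
    show "AE t in \<nu>. 1 / (1 - t * x) \<le> 1 / (1 - t * 1)"
      using AE_M0_measure[OF assms(1)]
    proof eventually_elim
      case (elim t)
      then have "0 < 1 - t * x" "\<bar>1 / (1 - t * x)\<bar> \<le> 1 / (1 - t)"
        using cauchy_kernel_bounds(1,2)[of t x] assms(2,3) by auto
      then show ?case by simp
    qed
  qed (use int_kernel[of x] int_kernel[of 1] assms(2,3) in auto)
qed

lemma measure_space_pos_if_msupp_nonempty:
  assumes sb: "sets \<nu> = sets borel" and "finite_measure \<nu>" and "msupp \<nu> \<noteq> {}"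
  shows "0 < measure \<nu> (space \<nu>)"
proof (rule ccontr)
  interpret finite_measure \<nu> by fact
  assume "\<not> 0 < measure \<nu> (space \<nu>)"
  then have "emeasure \<nu> (space \<nu>) = 0"
    using measure_nonneg[of \<nu> "space \<nu>"] by (simp add: emeasure_eq_measure)
  then have "emeasure \<nu> (ball x r) = 0" for x r
    using emeasure_mono[of "ball x r" "space \<nu>" \<nu>] sb by (simp add: sets_eq_imp_space_eq[OF sb])
  then have "msupp \<nu> = {}"
    unfolding msupp_def by (auto intro!: exI[of _ 1])
  with assms(3) show False by simp
qed

lemma msupp_subset_density:
  fixes g :: "real \<Rightarrow> real"
  assumes sb: "sets \<mu> = sets borel" and g: "g \<in> borel_measurable borel"
    and lower: "AE x in \<mu>. c \<le> g x" and "0 < c"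
  shows "msupp \<mu> \<subseteq> msupp (density \<mu> (\<lambda>x. ennreal (g x)))"
proof
  fix x assume "x \<in> msupp \<mu>"
  show "x \<in> msupp (density \<mu> (\<lambda>x. ennreal (g x)))"
    unfolding msupp_def
  proof (intro CollectI allI impI)
    fix r :: real assume "0 < r"
    have "ennreal c * emeasure \<mu> (ball x r) = (\<integral>\<^sup>+y. ennreal c * indicator (ball x r) y \<partial>\<mu>)"
      using sb by (simp add: nn_integral_cmult_indicator)
    also have "\<dots> \<le> (\<integral>\<^sup>+y. ennreal (g y) * indicator (ball x r) y \<partial>\<mu>)"
      using lower by (intro nn_integral_mono_AE) (auto elim!: eventually_mono intro: ennreal_leI
          simp: indicator_def)
    also have "\<dots> = emeasure (density \<mu> (\<lambda>x. ennreal (g x))) (ball x r)"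
      using sb g by (simp add: emeasure_density measurable_sets_borel)
    finally show "emeasure (density \<mu> (\<lambda>x. ennreal (g x))) (ball x r) \<noteq> 0"
      using \<open>x \<in> msupp \<mu>\<close> \<open>0 < r\<close> \<open>0 < c\<close> by (auto simp: msupp_def le_zero_eq)
  qed
qed

lemma M0_measure_density:
  fixes g :: "real \<Rightarrow> real"
  assumes \<mu>: "M0_measure \<mu>" and g: "g \<in> borel_measurable borel"
    and bounds: "\<And>t. 0 \<le> t \<Longrightarrow> t < 1 \<Longrightarrow> 0 \<le> g t \<and> g t \<le> K"
  shows "M0_measure (density \<mu> (\<lambda>x. ennreal (g x)))"
proof (rule M0_measureI)
  have sb: "sets \<mu> = sets borel" using \<mu> by (simp add: M0_measure_def)
  have gm: "g \<in> borel_measurable \<mu>" by (rule measurable_sets_borel[OF sb g])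
  have g_nonneg: "AE x in \<mu>. 0 \<le> g x"
    using AE_M0_measure[OF \<mu>] by eventually_elim (use bounds in auto)
  show "sets (density \<mu> (\<lambda>x. ennreal (g x))) = sets borel" by (simp add: sb)
  have "emeasure (density \<mu> (\<lambda>x. ennreal (g x))) (- {0..<1})
      = (\<integral>\<^sup>+x. ennreal (g x) * indicator (- {0..<1}) x \<partial>\<mu>)"
    using gm sb by (simp add: emeasure_density)
  also have "\<dots> = (\<integral>\<^sup>+x. 0 \<partial>\<mu>)"
  proof (rule nn_integral_cong_AE)
    show "AE x in \<mu>. ennreal (g x) * indicator (- {0..<1}) x = 0"
      using AE_M0_measure[OF \<mu>] by eventually_elim simp
  qed
  finally show "emeasure (density \<mu> (\<lambda>x. ennreal (g x))) (- {0..<1}) = 0" by simp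
  have "integrable \<mu> (\<lambda>x. g x *\<^sub>R (1 / (1 - x)))"
  proof (rule integrable_M0_measure_dominated[OF \<mu>, where C = K])
    fix t :: real assume t: "0 \<le> t" "t < 1"
    then show "\<bar>g t *\<^sub>R (1 / (1 - t))\<bar> \<le> K / (1 - t)"
      using bounds[OF t] by (simp add: abs_mult divide_right_mono)
  qed (use g in measurable)
  then show "integrable (density \<mu> (\<lambda>x. ennreal (g x))) (\<lambda>t. 1 / (1 - t))"
    using gm g_nonneg by (subst integrable_density) (auto intro: measurable_sets_borel[OF sb])
qed

lemma moments_density_cauchy_transform:
  assumes \<mu>: "M0_measure \<mu>" and \<nu>: "M0_measure \<nu>"
  shows "(\<lambda>i. (\<integral>t. t ^ (l + i) \<partial>\<mu>) * (\<integral>t. t ^ i \<partial>\<nu>))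
           sums (\<integral>t. t ^ l \<partial>density \<mu> (\<lambda>x. ennreal (cauchy_transform \<nu> x)))"
proof -
  define g where "g = cauchy_transform \<nu>"
  define m where "m i = (\<integral>t. t ^ i \<partial>\<nu>)" for i
  have sb: "sets \<mu> = sets borel" using \<mu> by (simp add: M0_measure_def)
  have gb: "g \<in> borel_measurable borel"
    using \<nu> unfolding g_def M0_measure_def by (intro borel_measurable_cauchy_transform) auto
  then have gm: "g \<in> borel_measurable \<mu>" by (rule measurable_sets_borel[OF sb])
  have g_powser: "(\<lambda>i. m i * t ^ i) sums g t" if "0 \<le> t" "t < 1" for t
    using tendsto_uniform_limitI[OF cauchy_transform_powser[OF \<nu>], of t] that
    by (simp add: sums_def m_def g_def)
  have m_nonneg: "0 \<le> m i" for i
    unfolding m_def using AE_M0_measure[OF \<nu>] by (intro integral_nonneg_AE) (auto elim!: eventually_mono)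
  have g_bounds: "0 \<le> g t \<and> g t \<le> g 1" if "0 \<le> t" "t < 1" for t
    using cauchy_transform_bounds[OF \<nu> that] measure_nonneg[of \<nu> "space \<nu>"]
    unfolding g_def by linarith
  have partial_bound: "\<bar>\<Sum>i<n. m i * t ^ (l + i)\<bar> \<le> g 1" if t: "0 \<le> t" "t < 1" for t n
  proof -
    have "(\<Sum>i<n. m i * t ^ (l + i)) \<le> (\<Sum>i<n. m i * t ^ i)"
      using t m_nonneg by (intro sum_mono mult_left_mono) (simp_all add: power_add mult_left_le_one_le power_le_one)
    also have "\<dots> \<le> (\<Sum>i. m i * t ^ i)"
      using g_powser[OF t] m_nonneg t by (intro sum_le_suminf) (auto simp: sums_iff)
    also have "\<dots> = g t"
      using g_powser[OF t] by (simp add: sums_iff)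
    finally show ?thesis
      using g_bounds[OF t] m_nonneg t by (simp add: sum_nonneg)
  qed
  have "(\<lambda>n. \<integral>t. (\<Sum>i<n. m i * t ^ (l + i)) \<partial>\<mu>) \<longlonglongrightarrow> (\<integral>t. g t * t ^ l \<partial>\<mu>)"
  proof (rule integral_dominated_convergence[where w = "\<lambda>t. g 1"])
    show "AE t in \<mu>. (\<lambda>n. \<Sum>i<n. m i * t ^ (l + i)) \<longlonglongrightarrow> g t * t ^ l"
      using AE_M0_measure[OF \<mu>]
    proof eventually_elim
      case (elim t)
      have "(\<lambda>i. t ^ l * (m i * t ^ i)) sums (t ^ l * g t)"
        using g_powser elim by (intro sums_mult) auto
      then show ?case
        by (simp add: sums_def power_add mult_ac)
    qed
    show "AE t in \<mu>. norm (\<Sum>i<n. m i * t ^ (l + i)) \<le> g 1" for n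
      using AE_M0_measure[OF \<mu>] by eventually_elim (use partial_bound in auto)
    show "integrable \<mu> (\<lambda>t. g 1)"
      by (rule integrable_M0_measure_bounded[OF \<mu>, where B = "\<bar>g 1\<bar>"]) auto
  qed (use gb in \<open>auto intro!: measurable_sets_borel[OF sb] borel_measurable_times\<close>)
  moreover have "(\<integral>t. (\<Sum>i<n. m i * t ^ (l + i)) \<partial>\<mu>) = (\<Sum>i<n. (\<integral>t. t ^ (l + i) \<partial>\<mu>) * m i)" for n
  proof -
    have "integrable \<mu> (\<lambda>t. t ^ i)" for i
      by (rule integrable_M0_measure_bounded[OF \<mu>, where B = 1]) (auto simp: power_le_one)
    then show ?thesis by (simp add: Bochner_Integration.integral_sum mult.commute)
  qed
  moreover have "(\<integral>t. t ^ l \<partial>density \<mu> (\<lambda>x. ennreal (g x))) = (\<integral>t. g t * t ^ l \<partial>\<mu>)"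
  proof -
    have "AE x in \<mu>. 0 \<le> g x"
      using AE_M0_measure[OF \<mu>] by eventually_elim (use g_bounds in auto)
    then show ?thesis
      using integral_density[of "\<lambda>t. t ^ l" \<mu> g] gm by (simp add: measurable_sets_borel[OF sb])
  qed
  ultimately show ?thesis
    by (simp add: sums_def m_def g_def)
qed

lemma bracket_eq:
  "bracket a b = (fst a * fst b, density (snd a) (\<lambda>x. ennreal (cauchy_transform (snd b) x)))"
  by (simp add: bracket_def cauchy_transform_def)

lemma bracket_in_M0:
  assumes a: "in_M0 a" and b: "in_M0 b"
  shows "in_M0 (bracket a b)"
proof -
  obtain sign_a: "fst a = 1 \<or> fst a = -1" and sign_b: "fst b = 1 \<or> fst b = -1"
    and supp_a: "infinite (msupp (snd a))" and supp_b: "infinite (msupp (snd b))"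
    and \<mu>: "M0_measure (snd a)" and \<nu>: "M0_measure (snd b)"
    using a b by (auto simp: in_M0_iff in_M_def)
  define D where "D = density (snd a) (\<lambda>x. ennreal (cauchy_transform (snd b) x))"
  have sb: "sets (snd a) = sets borel" "sets (snd b) = sets borel"
    and fin: "finite_measure (snd b)"
    using \<mu> \<nu> by (auto simp: M0_measure_def)
  have g: "cauchy_transform (snd b) \<in> borel_measurable borel"
    by (rule borel_measurable_cauchy_transform[OF sb(2) fin])
  have bounds: "measure (snd b) (space (snd b)) \<le> cauchy_transform (snd b) t
      \<and> cauchy_transform (snd b) t \<le> cauchy_transform (snd b) 1" if "0 \<le> t" "t < 1" for t
    using cauchy_transform_bounds[OF \<nu> that] by simp
  have mass: "0 < measure (snd b) (space (snd b))"
    using measure_space_pos_if_msupp_nonempty[OF sb(2) fin] supp_b by force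
  have D: "M0_measure D"
    unfolding D_def
    by (rule M0_measure_density[OF \<mu> g]) (use bounds mass in \<open>auto intro: order_trans[OF less_imp_le]\<close>)
  have "msupp (snd a) \<subseteq> msupp D"
    unfolding D_def
  proof (rule msupp_subset_density[OF sb(1) g _ mass])
    show "AE x in snd a. measure (snd b) (space (snd b)) \<le> cauchy_transform (snd b) x"
      using AE_M0_measure[OF \<mu>] by eventually_elim (use bounds in auto)
  qed
  then have "infinite (msupp D)" using supp_a infinite_super by blast
  moreover have "emeasure D (- {0..1}) = 0"
  proof -
    have "- {0..1} \<subseteq> - {0..<1::real}" by auto
    from emeasure_mono[OF this, of D] show ?thesis using D by (simp add: M0_measure_def)
  qed
  ultimately have "in_M (bracket a b)"
    using sign_a sign_b D by (auto simp: bracket_eq D_def[symmetric] in_M_def M0_measure_def)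
  then show ?thesis
    using D by (simp add: in_M0_iff bracket_eq D_def)
qed

lemma bracket_moments:
  assumes "in_M0 a" "in_M0 b"
  shows "(\<lambda>i. sint a (\<lambda>t. t ^ (l + i)) * sint b (\<lambda>t. t ^ i)) sums sint (bracket a b) (\<lambda>t. t ^ l)"
  using sums_mult[OF moments_density_cauchy_transform[of "snd a" "snd b" l], of "fst a * fst b"] assms
  by (simp add: in_M0_iff sint_def bracket_eq mult_ac)

lemma powser_coeffs_unique:
  fixes a b :: "nat \<Rightarrow> real"
  assumes "0 < r"
    and a: "\<And>x. \<bar>x\<bar> < r \<Longrightarrow> (\<lambda>i. a i * x ^ i) sums f x"
    and b: "\<And>x. \<bar>x\<bar> < r \<Longrightarrow> (\<lambda>i. b i * x ^ i) sums f x"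
  shows "a = b"
proof -
  define d where "d i = a i - b i" for i
  have d: "(\<lambda>i. d i * x ^ i) sums 0" if "\<bar>x\<bar> < r" for x
    using sums_diff[OF a[OF that] b[OF that]] by (simp add: d_def left_diff_distrib)
  have "d n = 0" for n
  proof (induction n rule: less_induct)
    case (less n)
    have "(\<lambda>i. d (i + n) * x ^ i) sums 0" if "x \<noteq> 0" "norm x < r" for x
    proof -
      have "(\<lambda>i. d (i + n) * x ^ (i + n)) sums 0"
        using sums_split_initial_segment[OF d[of x], of n] less that by simp
      from sums_mult[OF this, of "1 / x ^ n"] show ?thesis
        using that by (simp add: power_add field_simps)
    qed
    then have "((\<lambda>x. 0) \<longlongrightarrow> d (0 + n)) (at (0 :: real))"
      by (intro powser_limit_0_strong[OF \<open>0 < r\<close>]) auto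
    then show ?case by (simp add: tendsto_const_iff)
  qed
  then show ?thesis by (auto simp: d_def fun_eq_iff)
qed

definition nikishin :: "(nat \<Rightarrow> smeasure) \<Rightarrow> nat \<Rightarrow> nat \<Rightarrow> smeasure" where
  "nikishin sig k j = nik (map sig [k..<j+1])"

lemma nikishin_same: "nikishin sig k k = sig k"
  by (simp add: nikishin_def)

lemma nikishin_step: "k < j \<Longrightarrow> nikishin sig k j = bracket (sig k) (nikishin sig (Suc k) j)"
  by (cases "[Suc k..<j+1]") (simp_all add: nikishin_def upt_conv_Cons del: upt_Suc)

lemma nikishin_in_M0:
  assumes "k \<le> j" "\<And>i. k \<le> i \<Longrightarrow> i \<le> j \<Longrightarrow> in_M0 (sig i)"
  shows "in_M0 (nikishin sig k j)"
  using assms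
proof (induction k rule: inc_induct)
  case base
  then show ?case by (simp add: nikishin_same)
next
  case (step k)
  then show ?case by (simp add: nikishin_step bracket_in_M0)
qed

lemma nikishin_moments:
  assumes sig:
      "\<And>k. k \<in> {1..p} \<Longrightarrow> in_M0 (sig k) \<and> (\<forall>i. lam i k k = sint (sig k) (\<lambda>t. t ^ i))"
    and rec: "\<forall>k\<in>{1..<p}. \<forall>j\<in>{k+1..p}. \<forall>l.
                (\<lambda>i. lam (l + i) k k * lam i j (k + 1)) sums lam l j k"
    and "k \<le> j" "1 \<le> k" "j \<le> p"
  shows "in_M0 (nikishin sig k j) \<and> (\<forall>i. sint (nikishin sig k j) (\<lambda>t. t ^ i) = lam i j k)"
  using assms(3-)
proof (induction k rule: inc_induct)
  case base
  then show ?case using sig[of j] by (simp add: nikishin_same)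
next
  case (step k)
  then have IH: "in_M0 (nikishin sig (Suc k) j)"
      "\<And>i. sint (nikishin sig (Suc k) j) (\<lambda>t. t ^ i) = lam i j (Suc k)"
    and k: "in_M0 (sig k)" "\<And>i. lam i k k = sint (sig k) (\<lambda>t. t ^ i)"
    using sig[of k] by auto
  have eq: "nikishin sig k j = bracket (sig k) (nikishin sig (Suc k) j)"
    using step by (simp add: nikishin_step)
  have "sint (nikishin sig k j) (\<lambda>t. t ^ l) = lam l j k" for l
  proof (rule sums_unique2)
    show "(\<lambda>i. lam (l + i) k k * lam i j (k + 1)) sums sint (nikishin sig k j) (\<lambda>t. t ^ l)"
      using bracket_moments[OF k(1) IH(1), of l] by (simp add: eq k(2)[symmetric] IH(2))
    show "(\<lambda>i. lam (l + i) k k * lam i j (k + 1)) sums lam l j k"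
      using rec step by auto
  qed
  then show ?case using bracket_in_M0[OF k(1) IH(1)] eq by simp
qed

lemma moment_sequences_of_nikishin_system:
  assumes sig: "\<forall>j\<in>{1..p}. in_M0 (sig j)"
    and lim: "\<forall>j\<in>{1..p}. uniform_limit {-1..1} (\<lambda>n x. \<Sum>i<n. lam1 i j * x ^ i)
                (ctr (nik (map sig [1..<j+1]))) sequentially"
  shows "\<exists>lam :: nat \<Rightarrow> nat \<Rightarrow> nat \<Rightarrow> real.
            (\<forall>j\<in>{1..p}. \<forall>i. lam i j 1 = lam1 i j) \<and>
            (\<forall>k\<in>{1..<p}. \<forall>j\<in>{k+1..p}. \<forall>l.
                (\<lambda>i. lam (l + i) k k * lam i j (k + 1)) sums lam l j k) \<and>
            (\<forall>k\<in>{1..p}. \<forall>j\<in>{k..p}. rhmp_solvable (\<lambda>i. lam i j k))"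
proof -
  define lam where "lam i j k = sint (nikishin sig k j) (\<lambda>t. t ^ i)" for i j k
  have M0: "in_M0 (nikishin sig k j)" if "1 \<le> k" "k \<le> j" "j \<le> p" for k j
    using that sig by (intro nikishin_in_M0) auto
  have coeffs: "lam i j 1 = lam1 i j" if j: "j \<in> {1..p}" for i j
  proof -
    have "(\<lambda>i. lam1 i j) = (\<lambda>i. lam i j 1)"
    proof (rule powser_coeffs_unique[where r = 1])
      fix x :: real assume "\<bar>x\<bar> < 1"
      then have x: "x \<in> {-1..1}" by auto
      show "(\<lambda>i. lam1 i j * x ^ i) sums ctr (nikishin sig 1 j) x"
        using tendsto_uniform_limitI[OF lim[rule_format, OF j] x] by (simp add: sums_def nikishin_def)
      show "(\<lambda>i. lam i j 1 * x ^ i) sums ctr (nikishin sig 1 j) x"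
        using tendsto_uniform_limitI[OF ctr_powser x] M0[of 1 j] j
        by (simp add: sums_def lam_def in_M0_iff)
    qed simp
    then show ?thesis by (simp add: fun_eq_iff)
  qed
  have recurrence: "(\<lambda>i. lam (l + i) k k * lam i j (k + 1)) sums lam l j k"
    if "k \<in> {1..<p}" "j \<in> {k+1..p}" for k j l
    using bracket_moments[of "sig k" "nikishin sig (Suc k) j" l] that sig M0[of "Suc k" j]
    by (simp add: lam_def nikishin_same nikishin_step)
  have "rhmp_solvable (\<lambda>i. lam i j k)" if "k \<in> {1..p}" "j \<in> {k..p}" for k j
    unfolding rhmp_solvable_def lam_def using M0[of k j] that by (intro exI[of _ "nikishin sig k j"]) auto
  with coeffs recurrence show ?thesis by (intro exI[of _ lam]) blast
qed

lemma nikishin_system_of_moment_sequences: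
  assumes coeffs: "\<forall>j\<in>{1..p}. \<forall>i. lam i j 1 = lam1 i j"
    and rec: "\<forall>k\<in>{1..<p}. \<forall>j\<in>{k+1..p}. \<forall>l.
                (\<lambda>i. lam (l + i) k k * lam i j (k + 1)) sums lam l j k"
    and solvable: "\<forall>k\<in>{1..p}. \<forall>j\<in>{k..p}. rhmp_solvable (\<lambda>i. lam i j k)"
  shows "\<exists>sig :: nat \<Rightarrow> smeasure.
            (\<forall>j\<in>{1..p}. in_M0 (sig j)) \<and>
            (\<forall>j\<in>{1..p}. uniform_limit {-1..1} (\<lambda>n x. \<Sum>i<n. lam1 i j * x ^ i)
                (ctr (nik (map sig [1..<j+1]))) sequentially)"
proof -
  have "\<forall>k\<in>{1..p}. rhmp_solvable (\<lambda>i. lam i k k)"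
    using solvable by auto
  then have "\<forall>k\<in>{1..p}. \<exists>s. in_M0 s \<and> (\<forall>i. lam i k k = sint s (\<lambda>t. t ^ i))"
    unfolding rhmp_solvable_def .
  then obtain sig where
    sig: "\<And>k. k \<in> {1..p} \<Longrightarrow> in_M0 (sig k) \<and> (\<forall>i. lam i k k = sint (sig k) (\<lambda>t. t ^ i))"
    by metis
  have "uniform_limit {-1..1} (\<lambda>n x. \<Sum>i<n. lam1 i j * x ^ i) (ctr (nik (map sig [1..<j+1]))) sequentially"
    if "j \<in> {1..p}" for j
    using nikishin_moments[OF sig rec, of 1 j] ctr_powser[of "nikishin sig 1 j"] coeffs that
    by (simp add: in_M0_iff nikishin_def)
  with sig show ?thesis by (intro exI[of _ sig]) blast
qed

theorem theorem2p1:
  fixes p :: nat and lam1 :: "nat \<Rightarrow> nat \<Rightarrow> real"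
  assumes "p \<ge> 1"
  shows "(\<exists>sig :: nat \<Rightarrow> smeasure.
            (\<forall>j\<in>{1..p}. in_M0 (sig j)) \<and>
            (\<forall>j\<in>{1..p}. uniform_limit {-1..1}
                (\<lambda>n x. \<Sum>i<n. lam1 i j * x ^ i)
                (ctr (nik (map sig [1..<j+1]))) sequentially))
     \<longleftrightarrow>
         (\<exists>lam :: nat \<Rightarrow> nat \<Rightarrow> nat \<Rightarrow> real.
            (\<forall>j\<in>{1..p}. \<forall>i. lam i j 1 = lam1 i j) \<and>
            (\<forall>k\<in>{1..<p}. \<forall>j\<in>{k+1..p}. \<forall>l.
                (\<lambda>i. lam (l + i) k k * lam i j (k + 1)) sums lam l j k) \<and>
            (\<forall>k\<in>{1..p}. \<forall>j\<in>{k..p}. rhmp_solvable (\<lambda>i. lam i j k)))"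
  by (rule iffI; elim exE conjE)
     (rule moment_sequences_of_nikishin_system nikishin_system_of_moment_sequences; assumption)+

end
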